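(* Let $Q$ and $W$ satisfy the standing assumptions and $l\in\mathbb N_0$. Then $Q$ is simulated by $\hat Q^{I^l_0}$ w.r.t. $U\times Y$, i.e. there exists a simulation relation from $Q$ to $\hat Q^{I^l_0}$ w.r.t. $U\times Y$.
   Context: Strings and signals: $\diamond$ is a symbol not in any other set considered. For a set $A$ and $l\in\mathbb N_0$, $A^l$ is the set of strings of length $l$ over $A$, indexed $\zeta=\zeta(0)\cdots\zeta(l-1)$; $\lambda$ is the empty string and $\cdot$ denotes concatenation. For a map $w$ on $\mathbb Z$ (or a string) and integers $t_1\le t_2$, $w|_{[t_1,t_2]}=w(t_1)\cdots w(t_2)$ is the string of length $t_2-t_1+1$ (absolute time forgotten); if $t_2<t_1$ it is $\lambda$. State machines: a state machine is $Q=(X,U,Y,\delta,X_0)$ with $X_0\subseteq X$, $\delta\subseteq X\times U\times Y\times X$. Let $H_\delta(x)=\{y:\exists u,x'.\,(x,u,y,x')\in\delta\}$, $F_\delta(x,u)=\{x':\exists y\in H_\delta(x).\,(x,u,y,x')\in\delta\}$. The full behavior $\mathcal B_f(Q)$ is the set of $(\mu,\nu,\xi)\in(U\times Y\times X)^{\mathbb N_0}$ with $\xi(0)\in X_0$ and $(\xi(k),\mu(k),\nu(k),\xi(k+1))\in\delta$ for all $k\in\mathbb N_0$. $Q$ is live and reachable if every $x\in X_0$ is $\xi(0)$ for some $(\mu,\nu,\xi)\in\mathcal B_f(Q)$ and every $x\in X$ is $\xi(k)$ for some such trajectory and some $k$. Standing assumptions: $Q=(X,U,Y,\delta,X_0)$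 is live and reachable and satisfies $(x,u,y,x')\in\delta\iff(x'\in F_\delta(x,u)\wedge y\in H_\delta(x))$ for all $x,x'\in X,u\in U,y\in Y$; the external signal space $W$ is finite and either $W=U\times Y$ or $W=Y$. The projection $\pi_W(u,y)$ is $(u,y)$ if $W=U\times Y$ and $y$ if $W=Y$ (likewise $\pi_{U\times Y}(u,y)=(u,y)$, $\pi_Y(u,y)=y$). Behaviors: $\mathcal B_S(Q)$ is the set of pairs $(w,\xi)$ of maps on $\mathbb Z$ with $w(k)=\xi(k)=\diamond$ for $k<0$ and $(w(k),\xi(k))=(\pi_W(\mu(k),\nu(k)),\xi'(k))$ for $k\ge0$, for some $(\mu,\nu,\xi')\in\mathcal B_f(Q)$. Corresponding strings: for integers $a,b$ and $x\in X$, $E^{[a,b]}(x)=\{\zeta:\exists(w,\xi)\in\mathcal B_S(Q),k\in\mathbb N_0:\ \xi(k)=x,\ \zeta=w|_{[k+a,k+b]}\}$. For $l,m\in\mathbb N_0$ with $m\le l$, $I^l_m=[m-l,m-1]$. Abstract state machine: $\hat Q^{I^l_m}=(\hat X^{I^l_m},U,Y,\hat\delta^{I^l_m},\hat X^{I^l_m}_0)$ with $\hat X^{I^l_m}=\bigcup_{x\in X}E^{I^l_m}(x)$, $\hat X^{I^l_m}_0=\bigcup_{x\in X_0}E^{I^l_m}(x)$, and $(\hat x,u,y,\hat x')\in\hat\delta^{I^l_m}$ iff (1) $\hat x'|_{[0,l-m-1]}=(\hat x|_{[0,l-m-1]}\cdot\pi_W(u,y))|_{[1,l-m]}$, (2)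 $\hat x|_{[l-m,l-1]}=(\pi_W(u,y)\cdot\hat x'|_{[l-m,l-2]})|_{[0,m-1]}$, and (3) there are $x,x'\in X$ with $\hat x\in E^{I^l_m}(x)$, $\hat x'\in E^{I^l_m}(x')$, $(x,u,y,x')\in\delta$. Simulation relations: for state machines $Q_i=(X_i,U,Y,\delta_i,X_{0,i})$, $i=1,2$, and $V\in\{U\times Y,Y\}$, a relation $\mathcal R\subseteq X_1\times X_2$ is a simulation relation from $Q_1$ to $Q_2$ w.r.t. $V$ if (a) for every $x_1\in X_{0,1}$ there is $x_2\in X_{0,2}$ with $(x_1,x_2)\in\mathcal R$, and (b) for all $(x_1,x_2)\in\mathcal R$ and $(x_1,u_1,y_1,x_1')\in\delta_1$ there exist $u_2,y_2,x_2'$ with $(x_2,u_2,y_2,x_2')\in\delta_2$, $(x_1',x_2')\in\mathcal R$ and $\pi_V(u_1,y_1)=\pi_V(u_2,y_2)$. *)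

theory Defs
  imports Main
begin

definition state_machine ::
  "'x set \<Rightarrow> 'u set \<Rightarrow> 'y set \<Rightarrow> ('x \<times> 'u \<times> 'y \<times> 'x) set \<Rightarrow> 'x set \<Rightarrow> bool" where
  "state_machine X U Y \<delta> X0 \<longleftrightarrow> X0 \<subseteq> X \<and> \<delta> \<subseteq> X \<times> U \<times> Y \<times> X"

definition H_of :: "('x \<times> 'u \<times> 'y \<times> 'x) set \<Rightarrow> 'x \<Rightarrow> 'y set" where
  "H_of \<delta> x = {y. \<exists>u x'. (x, u, y, x') \<in> \<delta>}"

definition F_of :: "('x \<times> 'u \<times> 'y \<times> 'x) set \<Rightarrow> 'x \<Rightarrow> 'u \<Rightarrow> 'x set" where
  "F_of \<delta> x u = {x'. \<exists>y \<in> H_of \<delta> x. (x, u, y, x') \<in> \<delta>}"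

definition full_behavior ::
  "('x \<times> 'u \<times> 'y \<times> 'x) set \<Rightarrow> 'x set \<Rightarrow> ((nat \<Rightarrow> 'u) \<times> (nat \<Rightarrow> 'y) \<times> (nat \<Rightarrow> 'x)) set" where
  "full_behavior \<delta> X0 = {(\<mu>, \<nu>, \<xi>). \<xi> 0 \<in> X0 \<and> (\<forall>k. (\<xi> k, \<mu> k, \<nu> k, \<xi> (Suc k)) \<in> \<delta>)}"

definition live_reachable ::
  "'x set \<Rightarrow> ('x \<times> 'u \<times> 'y \<times> 'x) set \<Rightarrow> 'x set \<Rightarrow> bool" where
  "live_reachable X \<delta> X0 \<longleftrightarrow>
     (\<forall>x \<in> X0. \<exists>(\<mu>, \<nu>, \<xi>) \<in> full_behavior \<delta> X0. \<xi> 0 = x) \<and>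
     (\<forall>x \<in> X. \<exists>(\<mu>, \<nu>, \<xi>) \<in> full_behavior \<delta> X0. \<exists>k. \<xi> k = x)"

(* An element of W is encoded as a pair
   ('u option \<times> 'y): if W = U \<times> Y (flag wU = True) then (u,y) is encoded as
   (Some u, y); if W = Y (wU = False) then y is encoded as (None, y).
   pi_W is the projection. *)
definition piW :: "bool \<Rightarrow> 'u \<Rightarrow> 'y \<Rightarrow> 'u option \<times> 'y" where
  "piW wU u y = (if wU then (Some u, y) else (None, y))"

definition Wset :: "bool \<Rightarrow> 'u set \<Rightarrow> 'y set \<Rightarrow> ('u option \<times> 'y) set" where
  "Wset wU U Y = (\<lambda>(u, y). piW wU u y) ` (U \<times> Y)"

(* The symbol \<diamond> is encoded as None; a W-value w is encoded as Some w. *)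

definition behavior_S ::
  "bool \<Rightarrow> ('x \<times> 'u \<times> 'y \<times> 'x) set \<Rightarrow> 'x set \<Rightarrow>
   ((int \<Rightarrow> ('u option \<times> 'y) option) \<times> (int \<Rightarrow> 'x option)) set" where
  "behavior_S wU \<delta> X0 = {(w, \<xi>). \<exists>(\<mu>, \<nu>, \<xi>') \<in> full_behavior \<delta> X0.
      (\<forall>k::int. k < 0 \<longrightarrow> w k = None \<and> \<xi> k = None) \<and>
      (\<forall>k::int. k \<ge> 0 \<longrightarrow> w k = Some (piW wU (\<mu> (nat k)) (\<nu> (nat k))) \<and> \<xi> k = Some (\<xi>' (nat k)))}"

definition sig_restr :: "(int \<Rightarrow> 'a) \<Rightarrow> int \<Rightarrow> int \<Rightarrow> 'a list" where
  "sig_restr w t1 t2 = map w [t1..t2]"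

definition str_restr :: "'a list \<Rightarrow> int \<Rightarrow> int \<Rightarrow> 'a list" where
  "str_restr \<zeta> t1 t2 = map (\<lambda>i. \<zeta> ! nat i) [t1..t2]"

definition E_str ::
  "bool \<Rightarrow> ('x \<times> 'u \<times> 'y \<times> 'x) set \<Rightarrow> 'x set \<Rightarrow> int \<Rightarrow> int \<Rightarrow> 'x \<Rightarrow>
   ('u option \<times> 'y) option list set" where
  "E_str wU \<delta> X0 a b x = {\<zeta>. \<exists>(w, \<xi>) \<in> behavior_S wU \<delta> X0. \<exists>k::nat.
      \<xi> (int k) = Some x \<and> \<zeta> = sig_restr w (int k + a) (int k + b)}"

definition hatX ::
  "bool \<Rightarrow> 'x set \<Rightarrow> ('x \<times> 'u \<times> 'y \<times> 'x) set \<Rightarrow> 'x set \<Rightarrow> nat \<Rightarrow> nat \<Rightarrow>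
   ('u option \<times> 'y) option list set" where
  "hatX wU X \<delta> X0 l m = (\<Union>x \<in> X. E_str wU \<delta> X0 (int m - int l) (int m - 1) x)"

definition hatX0 ::
  "bool \<Rightarrow> ('x \<times> 'u \<times> 'y \<times> 'x) set \<Rightarrow> 'x set \<Rightarrow> nat \<Rightarrow> nat \<Rightarrow>
   ('u option \<times> 'y) option list set" where
  "hatX0 wU \<delta> X0 l m = (\<Union>x \<in> X0. E_str wU \<delta> X0 (int m - int l) (int m - 1) x)"

definition hatDelta ::
  "bool \<Rightarrow> 'x set \<Rightarrow> ('x \<times> 'u \<times> 'y \<times> 'x) set \<Rightarrow> 'x set \<Rightarrow> nat \<Rightarrow> nat \<Rightarrow>
   (('u option \<times> 'y) option list \<times> 'u \<times> 'y \<times> ('u option \<times> 'y) option list) set" where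
  "hatDelta wU X \<delta> X0 l m = {(xh, u, y, xh').
     xh \<in> hatX wU X \<delta> X0 l m \<and> xh' \<in> hatX wU X \<delta> X0 l m \<and>
     str_restr xh' 0 (int l - int m - 1) =
        str_restr (str_restr xh 0 (int l - int m - 1) @ [Some (piW wU u y)]) 1 (int l - int m) \<and>
     str_restr xh (int l - int m) (int l - 1) =
        str_restr ([Some (piW wU u y)] @ str_restr xh' (int l - int m) (int l - 2)) 0 (int m - 1) \<and>
     (\<exists>x \<in> X. \<exists>x' \<in> X. xh \<in> E_str wU \<delta> X0 (int m - int l) (int m - 1) x \<and>
        xh' \<in> E_str wU \<delta> X0 (int m - int l) (int m - 1) x' \<and> (x, u, y, x') \<in> \<delta>)}"

(* simulation relation from Q1 to Q2 w.r.t. V (vU = True: V = U \<times> Y, False: V = Y) *)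
definition sim_rel ::
  "bool \<Rightarrow> 'x1 set \<Rightarrow> ('x1 \<times> 'u \<times> 'y \<times> 'x1) set \<Rightarrow> 'x1 set \<Rightarrow>
   'x2 set \<Rightarrow> ('x2 \<times> 'u \<times> 'y \<times> 'x2) set \<Rightarrow> 'x2 set \<Rightarrow> ('x1 \<times> 'x2) set \<Rightarrow> bool" where
  "sim_rel vU X1 \<delta>1 X01 X2 \<delta>2 X02 R \<longleftrightarrow>
     R \<subseteq> X1 \<times> X2 \<and>
     (\<forall>x1 \<in> X01. \<exists>x2 \<in> X02. (x1, x2) \<in> R) \<and>
     (\<forall>x1 x2 u1 y1 x1'. (x1, x2) \<in> R \<and> (x1, u1, y1, x1') \<in> \<delta>1 \<longrightarrow>
        (\<exists>u2 y2 x2'. (x2, u2, y2, x2') \<in> \<delta>2 \<and> (x1', x2') \<in> R \<and> piW vU u1 y1 = piW vU u2 y2))"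

end

theory Submission
  imports Defs
begin

text \<open>Relate every state x to each string of the last l external signal values seen on
  some run reaching x. Any transition (x, u, y, x') extends such a run: cut the run at the
  visit of x, take the transition, and continue along any run through x' (which exists by
  reachability). The window of the spliced run at x' is the old window shifted by the new
  value pi_W(u, y), which is exactly a transition of the abstract machine for m = 0.\<close>

definition ext_signal :: "bool \<Rightarrow> (nat \<Rightarrow> 'u) \<Rightarrow> (nat \<Rightarrow> 'y) \<Rightarrow> int \<Rightarrow> ('u option \<times> 'y) option" where
  "ext_signal wU \<mu> \<nu> t = (if t < 0 then None else Some (piW wU (\<mu> (nat t)) (\<nu> (nat t))))"

definition ext_state :: "(nat \<Rightarrow> 'x) \<Rightarrow> int \<Rightarrow> 'x option" where
  "ext_state \<xi> t = (if t < 0 then None else Some (\<xi> (nat t)))"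

lemma mem_behavior_S_iff:
  "(w, \<xi>) \<in> behavior_S wU \<delta> X0 \<longleftrightarrow>
     (\<exists>\<mu> \<nu> \<xi>'. (\<mu>, \<nu>, \<xi>') \<in> full_behavior \<delta> X0 \<and> w = ext_signal wU \<mu> \<nu> \<and> \<xi> = ext_state \<xi>')"
proof -
  have "(w = ext_signal wU \<mu> \<nu> \<and> \<xi> = ext_state \<xi>') \<longleftrightarrow>
        (\<forall>k::int. k < 0 \<longrightarrow> w k = None \<and> \<xi> k = None) \<and>
        (\<forall>k::int. k \<ge> 0 \<longrightarrow> w k = Some (piW wU (\<mu> (nat k)) (\<nu> (nat k))) \<and> \<xi> k = Some (\<xi>' (nat k)))"
    for \<mu> \<nu> \<xi>'
    by (auto simp: ext_signal_def ext_state_def fun_eq_iff)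
  then show ?thesis
    unfolding behavior_S_def by blast
qed

lemma mem_E_str_iff:
  "\<zeta> \<in> E_str wU \<delta> X0 a b x \<longleftrightarrow>
     (\<exists>\<mu> \<nu> \<xi> k. (\<mu>, \<nu>, \<xi>) \<in> full_behavior \<delta> X0 \<and> \<xi> k = x \<and>
        \<zeta> = sig_restr (ext_signal wU \<mu> \<nu>) (int k + a) (int k + b))"
proof
  assume "\<zeta> \<in> E_str wU \<delta> X0 a b x"
  then obtain w \<xi>s k where "(w, \<xi>s) \<in> behavior_S wU \<delta> X0" "\<xi>s (int k) = Some x"
    "\<zeta> = sig_restr w (int k + a) (int k + b)"
    unfolding E_str_def by blast
  moreover from this(1) obtain \<mu> \<nu> \<xi> where "(\<mu>, \<nu>, \<xi>) \<in> full_behavior \<delta> X0"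
    "w = ext_signal wU \<mu> \<nu>" "\<xi>s = ext_state \<xi>"
    by (auto simp: mem_behavior_S_iff)
  ultimately show "\<exists>\<mu> \<nu> \<xi> k. (\<mu>, \<nu>, \<xi>) \<in> full_behavior \<delta> X0 \<and> \<xi> k = x \<and>
        \<zeta> = sig_restr (ext_signal wU \<mu> \<nu>) (int k + a) (int k + b)"
    by (auto simp: ext_state_def)
next
  assume "\<exists>\<mu> \<nu> \<xi> k. (\<mu>, \<nu>, \<xi>) \<in> full_behavior \<delta> X0 \<and> \<xi> k = x \<and>
        \<zeta> = sig_restr (ext_signal wU \<mu> \<nu>) (int k + a) (int k + b)"
  then obtain \<mu> \<nu> \<xi> k where "(\<mu>, \<nu>, \<xi>) \<in> full_behavior \<delta> X0" "\<xi> k = x"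
    "\<zeta> = sig_restr (ext_signal wU \<mu> \<nu>) (int k + a) (int k + b)" by blast
  moreover have "(ext_signal wU \<mu> \<nu>, ext_state \<xi>) \<in> behavior_S wU \<delta> X0"
    using calculation(1) by (auto simp: mem_behavior_S_iff)
  moreover have "ext_state \<xi> (int k) = Some x"
    using calculation(2) by (simp add: ext_state_def)
  ultimately show "\<zeta> \<in> E_str wU \<delta> X0 a b x"
    unfolding E_str_def by blast
qed

lemma length_E_str: "\<zeta> \<in> E_str wU \<delta> X0 a b x \<Longrightarrow> length \<zeta> = nat (b - a + 1)"
  by (auto simp: mem_E_str_iff sig_restr_def)

definition splice_at :: "nat \<Rightarrow> nat \<Rightarrow> (nat \<Rightarrow> 'a) \<Rightarrow> (nat \<Rightarrow> 'a) \<Rightarrow> nat \<Rightarrow> 'a" where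
  "splice_at k j f g n = (if n \<le> k then f n else g (n - Suc k + j))"

lemma full_behavior_splice:
  assumes run: "(\<mu>, \<nu>, \<xi>) \<in> full_behavior \<delta> X0"
    and tr: "(\<xi> k, u, y, \<xi>' j) \<in> \<delta>"
    and run': "(\<mu>', \<nu>', \<xi>') \<in> full_behavior \<delta> X0"
  shows "(splice_at k j (\<mu>(k := u)) \<mu>', splice_at k j (\<nu>(k := y)) \<nu>', splice_at k j \<xi> \<xi>')
           \<in> full_behavior \<delta> X0"
proof -
  have steps: "(\<xi> n, \<mu> n, \<nu> n, \<xi> (Suc n)) \<in> \<delta>" "(\<xi>' n, \<mu>' n, \<nu>' n, \<xi>' (Suc n)) \<in> \<delta>" for n
    using run run' by (auto simp: full_behavior_def)
  have "(splice_at k j \<xi> \<xi>' n, splice_at k j (\<mu>(k := u)) \<mu>' n, splice_at k j (\<nu>(k := y)) \<nu>' n,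
         splice_at k j \<xi> \<xi>' (Suc n)) \<in> \<delta>" for n
  proof -
    consider "n < k" | "n = k" | "k < n" by arith
    then show ?thesis
    proof cases
      case 3
      then have "Suc n - Suc k + j = Suc (n - Suc k + j)" by arith
      with 3 show ?thesis using steps(2) by (simp add: splice_at_def)
    qed (use steps(1) tr in \<open>auto simp: splice_at_def\<close>)
  qed
  moreover have "splice_at k j \<xi> \<xi>' 0 \<in> X0"
    using run by (simp add: splice_at_def full_behavior_def)
  ultimately show ?thesis
    by (simp add: full_behavior_def)
qed

lemma sig_restr_cong:
  "(\<And>t. a \<le> t \<Longrightarrow> t \<le> b \<Longrightarrow> w t = w' t) \<Longrightarrow> sig_restr w a b = sig_restr w' a b"
  by (simp add: sig_restr_def)

lemma tl_sig_restr: "tl (sig_restr w a b) = sig_restr w (a + 1) b"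
  by (cases "a \<le> b") (simp_all add: sig_restr_def upto_rec1)

lemma sig_restr_snoc: "a \<le> b \<Longrightarrow> sig_restr w a b = sig_restr w a (b - 1) @ [w b]"
  by (simp add: sig_restr_def upto_rec2)

lemma str_restr_eq_drop: "str_restr xs (int i) (int (length xs) - 1) = drop i xs"
  unfolding str_restr_def by (rule nth_equalityI) (auto simp: nat_add_distrib)

lemma str_restr_empty: "b < a \<Longrightarrow> str_restr xs a b = []"
  by (simp add: str_restr_def)

lemma past_window_step:
  assumes \<zeta>: "\<zeta> \<in> E_str wU \<delta> X0 (- int l) (- 1) x"
    and tr: "(x, u, y, x') \<in> \<delta>"
    and reach: "(\<mu>', \<nu>', \<xi>') \<in> full_behavior \<delta> X0" "\<xi>' j = x'"
  shows "tl (\<zeta> @ [Some (piW wU u y)]) \<in> E_str wU \<delta> X0 (- int l) (- 1) x'"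
proof -
  obtain \<mu> \<nu> \<xi> k where run: "(\<mu>, \<nu>, \<xi>) \<in> full_behavior \<delta> X0" and xk: "\<xi> k = x"
    and \<zeta>_eq: "\<zeta> = sig_restr (ext_signal wU \<mu> \<nu>) (int k - int l) (int k - 1)"
    using \<zeta> by (auto simp: mem_E_str_iff)
  define \<mu>s \<nu>s \<xi>s where "\<mu>s = splice_at k j (\<mu>(k := u)) \<mu>'"
    and "\<nu>s = splice_at k j (\<nu>(k := y)) \<nu>'" and "\<xi>s = splice_at k j \<xi> \<xi>'"
  have run_s: "(\<mu>s, \<nu>s, \<xi>s) \<in> full_behavior \<delta> X0"
    unfolding \<mu>s_def \<nu>s_def \<xi>s_def
    by (rule full_behavior_splice[OF run _ reach(1)]) (use tr xk reach(2) in simp)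
  have at_Suc: "\<xi>s (Suc k) = x'"
    using reach(2) by (simp add: \<xi>s_def splice_at_def)
  let ?w = "ext_signal wU \<mu> \<nu>" and ?ws = "ext_signal wU \<mu>s \<nu>s"
  have past: "?ws t = ?w t" if "t < int k" for t
    using that by (auto simp: ext_signal_def \<mu>s_def \<nu>s_def splice_at_def)
  have now: "?ws (int k) = Some (piW wU u y)"
    by (simp add: ext_signal_def \<mu>s_def \<nu>s_def splice_at_def)
  have "sig_restr ?ws (int (Suc k) - int l) (int (Suc k) - 1)
          = tl (sig_restr ?ws (int k - int l) (int k))"
    by (simp add: tl_sig_restr algebra_simps)
  also have "\<dots> = tl (sig_restr ?ws (int k - int l) (int k - 1) @ [Some (piW wU u y)])"
    by (simp add: sig_restr_snoc now)
  also have "\<dots> = tl (\<zeta> @ [Some (piW wU u y)])"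
    unfolding \<zeta>_eq by (metis sig_restr_cong past zle_diff1_eq)
  finally have "tl (\<zeta> @ [Some (piW wU u y)]) =
      sig_restr ?ws (int (Suc k) + - int l) (int (Suc k) + - 1)"
    by simp
  then show ?thesis
    unfolding mem_E_str_iff using run_s at_Suc by blast
qed

lemma hatDelta_0_intro:
  assumes \<zeta>: "\<zeta> \<in> E_str wU \<delta> X0 (- int l) (- 1) x" "x \<in> X"
    and \<zeta>': "\<zeta>' \<in> E_str wU \<delta> X0 (- int l) (- 1) x'" "x' \<in> X"
    and tr: "(x, u, y, x') \<in> \<delta>"
    and shift: "\<zeta>' = tl (\<zeta> @ [Some (piW wU u y)])"
  shows "(\<zeta>, u, y, \<zeta>') \<in> hatDelta wU X \<delta> X0 l 0"
proof -
  have len: "length \<zeta> = l" "length \<zeta>' = l"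
    using length_E_str[OF \<zeta>(1)] length_E_str[OF \<zeta>'(1)] by simp_all
  have "str_restr \<zeta>' 0 (int l - 1) =
          str_restr (str_restr \<zeta> 0 (int l - 1) @ [Some (piW wU u y)]) 1 (int l)"
    using str_restr_eq_drop[of \<zeta> 0] str_restr_eq_drop[of \<zeta>' 0]
      str_restr_eq_drop[of "\<zeta> @ [Some (piW wU u y)]" 1]
    by (simp add: len shift drop_Suc del: drop_append)
  then show ?thesis
    using assms by (auto simp: hatDelta_def hatX_def str_restr_empty)
qed

definition past_window_rel ::
  "bool \<Rightarrow> 'x set \<Rightarrow> ('x \<times> 'u \<times> 'y \<times> 'x) set \<Rightarrow> 'x set \<Rightarrow> nat \<Rightarrow>
   ('x \<times> ('u option \<times> 'y) option list) set" where
  "past_window_rel wU X \<delta> X0 l = {(x, \<zeta>). x \<in> X \<and> \<zeta> \<in> E_str wU \<delta> X0 (- int l) (- 1) x}"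

lemma sim_rel_past_window_rel:
  assumes "state_machine X U Y \<delta> X0" and "live_reachable X \<delta> X0"
  shows "sim_rel True X \<delta> X0 (hatX wU X \<delta> X0 l 0) (hatDelta wU X \<delta> X0 l 0) (hatX0 wU \<delta> X0 l 0)
           (past_window_rel wU X \<delta> X0 l)"
    (is "sim_rel _ _ _ _ _ _ _ ?R")
proof -
  have \<delta>_X: "\<delta> \<subseteq> X \<times> U \<times> Y \<times> X" and X0_X: "X0 \<subseteq> X"
    using assms(1) by (simp_all add: state_machine_def)
  show ?thesis
    unfolding sim_rel_def
  proof (intro conjI allI impI ballI)
    show "?R \<subseteq> X \<times> hatX wU X \<delta> X0 l 0"
      by (auto simp: past_window_rel_def hatX_def)
  next
    fix x assume x: "x \<in> X0"
    then obtain \<mu> \<nu> \<xi> where "(\<mu>, \<nu>, \<xi>) \<in> full_behavior \<delta> X0" "\<xi> 0 = x"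
      using assms(2) by (fastforce simp: live_reachable_def)
    then have "sig_restr (ext_signal wU \<mu> \<nu>) (int 0 + - int l) (int 0 + - 1)
                 \<in> E_str wU \<delta> X0 (- int l) (- 1) x"
      unfolding mem_E_str_iff by blast
    with x X0_X show "\<exists>\<zeta> \<in> hatX0 wU \<delta> X0 l 0. (x, \<zeta>) \<in> ?R"
      unfolding past_window_rel_def hatX0_def by force
  next
    fix x \<zeta> u y x'
    assume "(x, \<zeta>) \<in> ?R \<and> (x, u, y, x') \<in> \<delta>"
    then have \<zeta>: "\<zeta> \<in> E_str wU \<delta> X0 (- int l) (- 1) x" "x \<in> X" and tr: "(x, u, y, x') \<in> \<delta>"
      by (auto simp: past_window_rel_def)
    have "x' \<in> X" using tr \<delta>_X by auto
    then obtain \<mu>' \<nu>' \<xi>' j where "(\<mu>', \<nu>', \<xi>') \<in> full_behavior \<delta> X0" "\<xi>' j = x'"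
      using assms(2) by (fastforce simp: live_reachable_def)
    then have \<zeta>': "tl (\<zeta> @ [Some (piW wU u y)]) \<in> E_str wU \<delta> X0 (- int l) (- 1) x'"
      using past_window_step[OF \<zeta>(1) tr] by blast
    have "(\<zeta>, u, y, tl (\<zeta> @ [Some (piW wU u y)])) \<in> hatDelta wU X \<delta> X0 l 0"
      by (rule hatDelta_0_intro[OF \<zeta> \<zeta>' \<open>x' \<in> X\<close> tr refl])
    moreover have "(x', tl (\<zeta> @ [Some (piW wU u y)])) \<in> ?R"
      using \<zeta>' \<open>x' \<in> X\<close> by (simp add: past_window_rel_def)
    ultimately show "\<exists>u' y' \<zeta>''. (\<zeta>, u', y', \<zeta>'') \<in> hatDelta wU X \<delta> X0 l 0 \<and> (x', \<zeta>'') \<in> ?R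
                      \<and> piW True u y = piW True u' y'"
      by blast
  qed
qed

theorem mainTheorem4:
  fixes X :: "'x set" and U :: "'u set" and Y :: "'y set"
    and \<delta> :: "('x \<times> 'u \<times> 'y \<times> 'x) set" and X0 :: "'x set"
    and wU :: bool and l :: nat
  assumes "state_machine X U Y \<delta> X0"
    and "live_reachable X \<delta> X0"
    and "\<forall>x \<in> X. \<forall>u \<in> U. \<forall>y \<in> Y. \<forall>x' \<in> X.
           (x, u, y, x') \<in> \<delta> \<longleftrightarrow> (x' \<in> F_of \<delta> x u \<and> y \<in> H_of \<delta> x)"
    and "finite (Wset wU U Y)"
  shows "\<exists>R. sim_rel True X \<delta> X0
              (hatX wU X \<delta> X0 l 0) (hatDelta wU X \<delta> X0 l 0) (hatX0 wU \<delta> X0 l 0) R"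
  using sim_rel_past_window_rel[OF assms(1,2)] by blast

end
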